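(* Let $F=F(N,\mathcal D)$ be a connected GSC and let $i\in\mathcal D$. If there is exactly one word $\mathbf w\in\mathcal D^2$ such that the level-3 cell $\varphi_{i\mathbf w}(F)$ intersects $\bigcup_{j\in\mathcal D\setminus\{i\}}\varphi_j(F)$, then $F$ is fragile.
   Context: GSC: $N\ge2$, $\mathcal D\subset\{0,\dots,N-1\}^2$ with $1<|\mathcal D|<N^2$, $\varphi_i(x)=\frac1N(x+i)$, $F$ the attractor $F=\bigcup_{i\in\mathcal D}\varphi_i(F)$; $\varphi_{i_1\cdots i_k}=\varphi_{i_1}\circ\cdots\circ\varphi_{i_k}$; a level-$k$ cell is a set $\varphi_{\mathbf i}(F)$ with $\mathbf i\in\mathcal D^k$. $F$ is fragile if there is a partition $\mathcal D=\mathcal D_1\cup\mathcal D_2$ into disjoint nonempty sets with $\big(\bigcup_{i\in\mathcal D_1}\varphi_i(F)\big)\cap\big(\bigcup_{i\in\mathcal D_2}\varphi_i(F)\big)$ a singleton. *)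

theory Defs
  imports "HOL-Analysis.Analysis"
begin

definition gsc_digits :: "nat \<Rightarrow> (nat \<times> nat) set \<Rightarrow> bool" where
  "gsc_digits N D \<longleftrightarrow> N \<ge> 2 \<and> D \<subseteq> {0..<N} \<times> {0..<N} \<and> 1 < card D \<and> card D < N^2"

definition phi :: "nat \<Rightarrow> nat \<times> nat \<Rightarrow> real \<times> real \<Rightarrow> real \<times> real" where
  "phi N i x = (1 / real N) *\<^sub>R (x + (real (fst i), real (snd i)))"

fun phiw :: "nat \<Rightarrow> (nat \<times> nat) list \<Rightarrow> real \<times> real \<Rightarrow> real \<times> real" where
  "phiw N [] = id"
| "phiw N (i # w) = phi N i \<circ> phiw N w"

definition is_gsc_attractor :: "nat \<Rightarrow> (nat \<times> nat) set \<Rightarrow> (real \<times> real) set \<Rightarrow> bool" where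
  "is_gsc_attractor N D F \<longleftrightarrow> compact F \<and> F \<noteq> {} \<and> F = (\<Union>i\<in>D. phi N i ` F)"

definition fragile :: "nat \<Rightarrow> (nat \<times> nat) set \<Rightarrow> (real \<times> real) set \<Rightarrow> bool" where
  "fragile N D F \<longleftrightarrow> (\<exists>D1 D2. D1 \<union> D2 = D \<and> D1 \<inter> D2 = {} \<and> D1 \<noteq> {} \<and> D2 \<noteq> {} \<and>
      (\<exists>p. (\<Union>i\<in>D1. phi N i ` F) \<inter> (\<Union>i\<in>D2. phi N i ` F) = {p}))"

end

theory Submission
  imports Defs
begin

(* Call K = contacts the set of x in F with phi_i x in the union of the cells phi_j(F), j <> i;
   the intersection to be shown a singleton is phi_i(K), and it is nonempty since F is connected.
   By uniqueness of the word [u, v], every x in K lies in phi_u(phi_v(F)). Comparing coordinates,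
   a contact phi_i(phi_u y) = phi_j(phi_b y') either lifts to the contact phi_i y = phi_j y', or
   y is a corner of the unit square; a corner inside phi_v([0,1]^2) is the fixed point p_v of
   phi_v. Hence K is contained in phi_u(K) together with phi_u(p_v). If u = v, the contraction
   phi_u squeezes K onto p_u. If u <> v, a point of K in phi_u(K) would lie in phi_u(phi_u(F)),
   contradicting uniqueness, so K is {phi_u(p_v)}. *)

lemma fst_phi [simp]: "fst (phi N a x) = (fst x + real (fst a)) / real N"
  by (simp add: phi_def divide_inverse mult.commute)

lemma snd_phi [simp]: "snd (phi N a x) = (snd x + real (snd a)) / real N"
  by (simp add: phi_def divide_inverse mult.commute)

lemma dist_phi: "dist (phi N a x) (phi N a y) = dist x y / real N"
proof -
  have "phi N a x - phi N a y = (1 / real N) *\<^sub>R (x - y)"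
    by (simp add: phi_def algebra_simps)
  then show ?thesis by (simp add: dist_norm)
qed

definition phi_fixpoint :: "nat \<Rightarrow> nat \<times> nat \<Rightarrow> real \<times> real" where
  "phi_fixpoint N a = (real (fst a) / (real N - 1), real (snd a) / (real N - 1))"

lemma phi_phi_fixpoint: "N \<ge> 2 \<Longrightarrow> phi N a (phi_fixpoint N a) = phi_fixpoint N a"
  by (simp add: phi_fixpoint_def prod_eq_iff field_simps)

(* The first coordinate of phi_k (phi_a (s, _)) = phi_l (phi_b (t, _)), multiplied by N^2. *)
lemma shifted_digit_eq:
  fixes s t :: real and a b k l N :: nat
  assumes s: "s \<in> {0..1}" and t: "t \<in> {0..1}" and "a < N" "b < N"
    and eq: "s + a + N * k = t + b + N * l"
  shows "s + k = t + l \<or> (k = l \<and> s \<in> {0, 1})" and "k \<noteq> l \<Longrightarrow> s \<in> {0, 1}"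
proof -
  have ab: "real a \<le> real N - 1" "real b \<le> real N - 1" using assms(3,4) by linarith+
  have N: "real N > 0" using assms(3) by simp
  have st: "0 \<le> s" "s \<le> 1" "0 \<le> t" "t \<le> 1" using s t by auto
  have "real N * k \<le> real N * (l + 1)" "real N * l \<le> real N * (k + 1)"
    using eq ab st by (auto simp: distrib_left)
  then have "real k \<le> real l + 1" "real l \<le> real k + 1"
    using N mult_le_cancel_left_pos by (metis of_nat_1 of_nat_add)+
  then consider "k = l" | "k = l + 1" | "l = k + 1" by linarith
  then have "(s + k = t + l \<or> (k = l \<and> s \<in> {0, 1})) \<and> (k \<noteq> l \<longrightarrow> s \<in> {0, 1})"
  proof cases
    case 1
    then have sab: "s + a = t + b" using eq by simp
    consider "a = b" | "real a + 1 \<le> real b" | "real b + 1 \<le> real a" by linarith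
    then have "s = t \<or> s = 1 \<or> s = 0"
      using sab st by cases (simp, linarith, linarith)
    with 1 show ?thesis by auto
  next
    case 2
    then have "s + a + N = t + b" using eq by (simp add: distrib_left)
    then have "s = 0" "t = 1" using ab st by auto
    with 2 show ?thesis by auto
  next
    case 3
    then have "s + a = t + b + N" using eq by (simp add: distrib_left)
    then have "s = 1" "t = 0" using ab st by auto
    with 3 show ?thesis by auto
  qed
  then show "s + k = t + l \<or> (k = l \<and> s \<in> {0, 1})" "k \<noteq> l \<Longrightarrow> s \<in> {0, 1}" by auto
qed

lemma phi_phi_eq_cases:
  assumes x: "x \<in> {0..1} \<times> {0..1}" and y: "y \<in> {0..1} \<times> {0..1}"
    and a: "a \<in> {0..<N} \<times> {0..<N}" and b: "b \<in> {0..<N} \<times> {0..<N}" and "i \<noteq> j"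
    and eq: "phi N i (phi N a x) = phi N j (phi N b y)"
  shows "phi N i x = phi N j y \<or> x \<in> {0, 1} \<times> {0, 1}"
proof -
  have N: "real N > 0" using a by auto
  have "fst x + fst a + N * fst i = fst y + fst b + N * fst j"
    using arg_cong[OF eq, of fst] N by (simp add: field_simps)
  note fst_cases = shifted_digit_eq[OF _ _ _ _ this]
  have "snd x + snd a + N * snd i = snd y + snd b + N * snd j"
    using arg_cong[OF eq, of snd] N by (simp add: field_simps)
  note snd_cases = shifted_digit_eq[OF _ _ _ _ this]
  show ?thesis
  proof (cases "fst x + fst i = fst y + fst j \<and> snd x + snd i = snd y + snd j")
    case True
    then show ?thesis by (simp add: prod_eq_iff)
  next
    case False
    then show ?thesis
      using fst_cases snd_cases x y a b \<open>i \<noteq> j\<close> by (auto simp: mem_Times_iff prod_eq_iff)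
  qed
qed

lemma boundary_coord_of_cell:
  fixes q :: real and c N :: nat
  assumes "q \<in> {0..1}" "c < N" "N \<ge> 2" "(q + c) / N \<in> {0, 1}"
  shows "(q + c) / N = c / (real N - 1)"
proof -
  have N: "real N \<ge> 2" and c: "real c \<le> real N - 1" and q: "0 \<le> q" "q \<le> 1"
    using assms(1-3) by auto
  from assms(4) N consider "q + c = 0" | "q + c = N" by auto
  then show ?thesis
  proof cases
    case 1
    then have "real c = 0" using q by linarith
    with 1 show ?thesis by simp
  next
    case 2
    then have "real c = real N - 1" using q c by linarith
    with 2 N show ?thesis by simp
  qed
qed

lemma phi_corner_eq_fixpoint:
  assumes "N \<ge> 2" "a \<in> {0..<N} \<times> {0..<N}" "q \<in> {0..1} \<times> {0..1}"
    and "phi N a q \<in> {0, 1} \<times> {0, 1}"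
  shows "phi N a q = phi_fixpoint N a"
  using assms boundary_coord_of_cell[of "fst q" "fst a" N] boundary_coord_of_cell[of "snd q" "snd a" N]
  by (auto simp: prod_eq_iff phi_fixpoint_def mem_Times_iff)

lemma self_similar_values_in_unit_interval:
  fixes h :: "'a \<Rightarrow> real"
  assumes "compact (h ` F)" "F \<noteq> {}" "N \<ge> 2"
    and dec: "\<And>x. x \<in> F \<Longrightarrow> \<exists>z\<in>F. \<exists>c<N. h x = (h z + real c) / real N"
  shows "h ` F \<subseteq> {0..1}"
proof -
  have N: "real N \<ge> 2" using assms(3) by simp
  obtain xmax where xmax: "xmax \<in> F" "\<And>x. x \<in> F \<Longrightarrow> h x \<le> h xmax"
    using compact_attains_sup[OF assms(1)] assms(2) by auto
  obtain z c where "z \<in> F" "c < N" "h xmax * N = h z + real c"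
    using dec[OF xmax(1)] N by (auto simp: field_simps)
  moreover have "h z \<le> h xmax" "real c \<le> real N - 1" using xmax(2) \<open>z \<in> F\<close> \<open>c < N\<close> by auto
  ultimately have "h xmax * (real N - 1) \<le> real N - 1" by (simp add: algebra_simps)
  then have max_le_1: "h xmax \<le> 1" using N by simp
  obtain xmin where xmin: "xmin \<in> F" "\<And>x. x \<in> F \<Longrightarrow> h xmin \<le> h x"
    using compact_attains_inf[OF assms(1)] assms(2) by auto
  obtain z' c' where "z' \<in> F" "h xmin * N = h z' + real c'"
    using dec[OF xmin(1)] N by (auto simp: field_simps)
  moreover have "h xmin \<le> h z'" using xmin(2) \<open>z' \<in> F\<close> by auto
  ultimately have "h xmin * (real N - 1) \<ge> 0" by (simp add: algebra_simps)
  then have min_ge_0: "h xmin \<ge> 0" using N by (simp add: zero_le_mult_iff)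
  show ?thesis using xmax(2) xmin(2) max_le_1 min_ge_0 by force
qed

lemma bounded_subset_singleton_if_contracting:
  fixes S :: "'a::metric_space set"
  assumes "bounded S" "0 \<le> c" "c < 1"
    and contr: "\<And>x. x \<in> S \<Longrightarrow> \<exists>y\<in>S. dist x p \<le> c * dist y p"
  shows "S \<subseteq> {p}"
proof
  fix x assume x: "x \<in> S"
  obtain B where B: "\<And>y. y \<in> S \<Longrightarrow> dist p y \<le> B"
    using assms(1) bounded_any_center by metis
  have "\<forall>y\<in>S. dist y p \<le> c ^ n * B" for n
  proof (induction n)
    case 0
    then show ?case using B by (simp add: dist_commute)
  next
    case (Suc n)
    show ?case
    proof
      fix y assume "y \<in> S"
      then obtain z where z: "z \<in> S" "dist y p \<le> c * dist z p" using contr by blast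
      have "c * dist z p \<le> c * (c ^ n * B)" using Suc.IH z(1) assms(2) by (simp add: mult_left_mono)
      with z(2) show "dist y p \<le> c ^ Suc n * B" by (simp add: mult.assoc)
    qed
  qed
  moreover have "(\<lambda>n. c ^ n * B) \<longlonglongrightarrow> 0"
    using assms(2,3) by (intro tendsto_mult_left_zero LIMSEQ_power_zero) simp
  ultimately have "dist x p \<le> 0" using x by (intro LIMSEQ_le_const) auto
  then show "x \<in> {p}" by simp
qed

locale gsc_attractor =
  fixes N :: nat and D :: "(nat \<times> nat) set" and F :: "(real \<times> real) set"
  assumes digits: "gsc_digits N D" and attractor: "is_gsc_attractor N D F"
begin

lemma N_ge_2: "N \<ge> 2" and D_subset: "D \<subseteq> {0..<N} \<times> {0..<N}" and card_D_gt_1: "card D > 1"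
  using digits by (auto simp: gsc_digits_def)

lemma finite_D: "finite D"
  using D_subset by (rule finite_subset) simp

lemma compact_F: "compact F" and F_ne: "F \<noteq> {}" and F_eq: "F = (\<Union>a\<in>D. phi N a ` F)"
  using attractor by (auto simp: is_gsc_attractor_def)

lemma phi_image_subset: "a \<in> D \<Longrightarrow> phi N a ` F \<subseteq> F"
  using F_eq by blast

lemma mem_F_cases:
  assumes "x \<in> F"
  obtains a z where "a \<in> D" "z \<in> F" "x = phi N a z"
  using assms F_eq by blast

lemma other_digit_exists: "D - {a} \<noteq> {}"
proof
  assume "D - {a} = {}"
  then have "card D \<le> card {a}" by (intro card_mono) auto
  with card_D_gt_1 show False by simp
qed

lemma F_subset_unit_square: "F \<subseteq> {0..1} \<times> {0..1}"
proof -
  have "fst ` F \<subseteq> {0..1}"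
  proof (rule self_similar_values_in_unit_interval[OF _ F_ne N_ge_2])
    show "compact (fst ` F)"
      using compact_continuous_image[OF continuous_on_fst[OF continuous_on_id] compact_F] by simp
    fix x assume "x \<in> F"
    then obtain a z where "a \<in> D" "z \<in> F" "x = phi N a z" by (rule mem_F_cases)
    then show "\<exists>z\<in>F. \<exists>c<N. fst x = (fst z + real c) / real N"
      using D_subset by (intro bexI[of _ z] exI[of _ "fst a"]) auto
  qed
  moreover have "snd ` F \<subseteq> {0..1}"
  proof (rule self_similar_values_in_unit_interval[OF _ F_ne N_ge_2])
    show "compact (snd ` F)"
      using compact_continuous_image[OF continuous_on_snd[OF continuous_on_id] compact_F] by simp
    fix x assume "x \<in> F"
    then obtain a z where "a \<in> D" "z \<in> F" "x = phi N a z" by (rule mem_F_cases)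
    then show "\<exists>z\<in>F. \<exists>c<N. snd x = (snd z + real c) / real N"
      using D_subset by (intro bexI[of _ z] exI[of _ "snd a"]) auto
  qed
  ultimately show ?thesis using subset_fst_snd[of F] by blast
qed

lemma compact_cell: "compact (phi N a ` F)"
  unfolding phi_def by (intro compact_continuous_image[OF _ compact_F] continuous_intros)

lemma closed_cell_union: "A \<subseteq> D \<Longrightarrow> closed (\<Union>a\<in>A. phi N a ` F)"
  by (intro compact_imp_closed compact_UN compact_cell) (auto intro: finite_subset[OF _ finite_D])

lemma cell_unions_intersect:
  assumes "connected F" "D1 \<union> D2 = D" "D1 \<noteq> {}" "D2 \<noteq> {}"
  shows "(\<Union>a\<in>D1. phi N a ` F) \<inter> (\<Union>a\<in>D2. phi N a ` F) \<noteq> {}"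
proof (rule connected_as_closed_union[OF assms(1)])
  show "F = (\<Union>a\<in>D1. phi N a ` F) \<union> (\<Union>a\<in>D2. phi N a ` F)"
    using F_eq assms(2) by blast
  show "closed (\<Union>a\<in>D1. phi N a ` F)" "closed (\<Union>a\<in>D2. phi N a ` F)"
    using assms(2) by (auto intro: closed_cell_union)
  show "(\<Union>a\<in>D1. phi N a ` F) \<noteq> {}" "(\<Union>a\<in>D2. phi N a ` F) \<noteq> {}"
    using assms(3,4) F_ne by auto
qed

end

locale gsc_unique_bridge = gsc_attractor +
  fixes i u v :: "nat \<times> nat"
  assumes i_in_D: "i \<in> D" and u_in_D: "u \<in> D" and v_in_D: "v \<in> D"
    and bridge_unique: "\<And>a c x. a \<in> D \<Longrightarrow> c \<in> D \<Longrightarrow> x \<in> F \<Longrightarrow>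
      phi N i (phi N a (phi N c x)) \<in> (\<Union>j\<in>D - {i}. phi N j ` F) \<Longrightarrow> a = u \<and> c = v"
begin

definition contacts :: "(real \<times> real) set" where
  "contacts = {x \<in> F. phi N i x \<in> (\<Union>j\<in>D - {i}. phi N j ` F)}"

lemma contacts_subset_bridge_cell: "contacts \<subseteq> phi N u ` phi N v ` F"
proof
  fix x assume x: "x \<in> contacts"
  then have "x \<in> F" unfolding contacts_def by simp
  then obtain a y where a: "a \<in> D" and y: "y \<in> F" and "x = phi N a y" by (rule mem_F_cases)
  from y obtain c z where c: "c \<in> D" and z: "z \<in> F" and "y = phi N c z" by (rule mem_F_cases)
  then have xz: "x = phi N a (phi N c z)" using \<open>x = phi N a y\<close> by simp
  then have "phi N i (phi N a (phi N c z)) \<in> (\<Union>j\<in>D - {i}. phi N j ` F)"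
    using x unfolding contacts_def by simp
  then have "a = u \<and> c = v" by (rule bridge_unique[OF a c z])
  with xz z show "x \<in> phi N u ` phi N v ` F" by blast
qed

lemma contacts_step:
  assumes "x \<in> contacts"
  obtains x' where "x = phi N u x'" "x' \<in> contacts \<or> x' = phi_fixpoint N v"
proof -
  obtain z where z: "z \<in> F" and x: "x = phi N u (phi N v z)"
    using assms contacts_subset_bridge_cell by blast
  obtain j y where j: "j \<in> D - {i}" and y: "y \<in> F" and xy: "phi N i x = phi N j y"
    using assms unfolding contacts_def by auto
  obtain b y' where b: "b \<in> D" and y': "y' \<in> F" and "y = phi N b y'"
    using y by (rule mem_F_cases)
  with x xy have eq: "phi N i (phi N u (phi N v z)) = phi N j (phi N b y')" by simp
  have vz: "phi N v z \<in> F" using z v_in_D phi_image_subset by blast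
  have "phi N i (phi N v z) = phi N j y' \<or> phi N v z \<in> {0, 1} \<times> {0, 1}"
  proof (rule phi_phi_eq_cases[OF _ _ _ _ _ eq])
    show "phi N v z \<in> {0..1} \<times> {0..1}" "y' \<in> {0..1} \<times> {0..1}"
      using vz y' F_subset_unit_square by blast+
    show "u \<in> {0..<N} \<times> {0..<N}" "b \<in> {0..<N} \<times> {0..<N}"
      using u_in_D b D_subset by blast+
    show "i \<noteq> j" using j by blast
  qed
  then show ?thesis
  proof
    assume "phi N i (phi N v z) = phi N j y'"
    then have "phi N v z \<in> contacts" using vz y' j unfolding contacts_def by blast
    with x that show ?thesis by blast
  next
    assume "phi N v z \<in> {0, 1} \<times> {0, 1}"
    then have "phi N v z = phi_fixpoint N v"
      using v_in_D D_subset z F_subset_unit_square by (intro phi_corner_eq_fixpoint[OF N_ge_2]) blast+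
    with x that show ?thesis by blast
  qed
qed

lemma contacts_subsingleton: "\<exists>q. contacts \<subseteq> {q}"
proof (cases "u = v")
  case True
  have "contacts \<subseteq> {phi_fixpoint N v}"
  proof (rule bounded_subset_singleton_if_contracting)
    show "bounded contacts"
      using compact_F by (rule bounded_subset[OF compact_imp_bounded]) (auto simp: contacts_def)
    show "0 \<le> 1 / real N" "1 / real N < 1" using N_ge_2 by auto
    fix x assume x: "x \<in> contacts"
    then obtain x' where x': "x = phi N u x'" "x' \<in> contacts \<or> x' = phi_fixpoint N v"
      by (rule contacts_step)
    then have "dist x (phi_fixpoint N v) = 1 / real N * dist x' (phi_fixpoint N v)"
      using True dist_phi[of N v x' "phi_fixpoint N v"] phi_phi_fixpoint[OF N_ge_2] by simp
    then show "\<exists>y\<in>contacts. dist x (phi_fixpoint N v) \<le> 1 / real N * dist y (phi_fixpoint N v)"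
      using x x' by auto
  qed
  then show ?thesis by blast
next
  case False
  have "x = phi N u (phi_fixpoint N v)" if x: "x \<in> contacts" for x
  proof -
    obtain x' where x': "x = phi N u x'" "x' \<in> contacts \<or> x' = phi_fixpoint N v"
      using x by (rule contacts_step)
    have "x' \<notin> contacts"
    proof
      assume "x' \<in> contacts"
      then obtain z where z: "z \<in> F" and "x' = phi N u (phi N v z)"
        using contacts_subset_bridge_cell by blast
      then have "phi N i (phi N u (phi N u (phi N v z))) \<in> (\<Union>j\<in>D - {i}. phi N j ` F)"
        using x x'(1) unfolding contacts_def by simp
      moreover have "phi N v z \<in> F" using z v_in_D phi_image_subset by blast
      ultimately have "u = v" using bridge_unique[OF u_in_D u_in_D] by blast
      with False show False ..
    qed
    with x' show ?thesis by simp
  qed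
  then show ?thesis by blast
qed

lemma cell_meets_others_eq_image_contacts:
  "phi N i ` F \<inter> (\<Union>j\<in>D - {i}. phi N j ` F) = phi N i ` contacts"
  unfolding contacts_def by blast

end

theorem mainTheorem14:
  fixes N :: nat and D :: "(nat \<times> nat) set" and F :: "(real \<times> real) set" and i :: "nat \<times> nat"
  assumes "gsc_digits N D"
    and "is_gsc_attractor N D F"
    and "connected F"
    and "i \<in> D"
    and "\<exists>!w. length w = 2 \<and> set w \<subseteq> D \<and>
           phiw N (i # w) ` F \<inter> (\<Union>j\<in>D - {i}. phi N j ` F) \<noteq> {}"
  shows "fragile N D F"
proof -
  let ?others = "\<Union>j\<in>D - {i}. phi N j ` F"
  from assms(5) obtain w
    where w: "length w = 2 \<and> set w \<subseteq> D \<and> phiw N (i # w) ` F \<inter> ?others \<noteq> {}"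
      and w_unique: "\<forall>w'. length w' = 2 \<and> set w' \<subseteq> D \<and> phiw N (i # w') ` F \<inter> ?others \<noteq> {} \<longrightarrow> w' = w"
    by (rule ex1E)
  from w have "length w = 2" by simp
  then obtain u v where uv: "w = [u, v]" by (auto simp: numeral_2_eq_2 length_Suc_conv)
  interpret gsc_unique_bridge N D F i u v
  proof unfold_locales
    show "gsc_digits N D" "is_gsc_attractor N D F" "i \<in> D" by (fact assms)+
    from w have "set w \<subseteq> D" by simp
    with uv show "u \<in> D" "v \<in> D" by auto
    fix a c x assume "a \<in> D" "c \<in> D" "x \<in> F" "phi N i (phi N a (phi N c x)) \<in> ?others"
    then have "length [a, c] = 2 \<and> set [a, c] \<subseteq> D \<and> phiw N (i # [a, c]) ` F \<inter> ?others \<noteq> {}"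
      by auto
    then have "[a, c] = w" by (rule w_unique[rule_format])
    with uv show "a = u \<and> c = v" by simp
  qed
  have partition: "{i} \<union> (D - {i}) = D" "{i} \<inter> (D - {i}) = {}" "{i} \<noteq> {}" "D - {i} \<noteq> {}"
    using i_in_D other_digit_exists by auto
  obtain q where "contacts \<subseteq> {q}" using contacts_subsingleton by blast
  moreover have "(\<Union>a\<in>{i}. phi N a ` F) \<inter> ?others \<noteq> {}"
    using cell_unions_intersect[OF assms(3) partition(1,3,4)] .
  ultimately have "(\<Union>a\<in>{i}. phi N a ` F) \<inter> ?others = {phi N i q}"
    using cell_meets_others_eq_image_contacts by auto
  with partition show ?thesis unfolding fragile_def by blast
qed

end
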